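(* Consider the following finite dynamic game. There is a finite set of players $\mathcal{I}$ and times $t\in\{1,\dots,T\}$. Each player $i$ has a local state $X_t^i$ (in a finite set), with $X_t=(X_t^i)_{i\in\mathcal{I}}$, and a local noise process $W_t^i$; players have no initial information. At each time every player $i$ chooses $U_t^i$ (in a finite set), $U_t=(U_t^i)_i$, and $$(X_{t+1}^i,Y_t^i)=f_t^i(X_t^i,U_t,W_t^i),\qquad R_t^i=r_t^i(X_t,U_t)$$ for fixed functions $f_t^i,r_t^i$, where $Y_t^i$ is a public observation (in a finite set), $Y_t=(Y_t^i)_i$. Player $i$'s information at time $t$ is $H_t^i=(Y_{1:t-1},U_{1:t-1},X_{1:t}^i)$. The random variables $(X_1^i)_{i\in\mathcal{I}}$ and $(W_t^i)_{i\in\mathcal{I},t}$ are all mutually independent. Then for every player $i$, $K_t^i=(Y_{1:t-1},U_{1:t-1},X_t^i)$ is unilaterally sufficient information for player $i$.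
   Context: Behavioral strategy: $g_t^i$ maps realizations of $H_t^i$ to distributions over player $i$'s actions; $\Pr^g$ denotes probability under profile $g=(g^i)_i$. $K_t^i$ is a function of $H_t^i$ that can be updated recursively from $K_{t-1}^i$ and the new information $(Y_{t-1},U_{t-1},X_t^i)$; $k_t^i$ denotes the value of $K_t^i$ corresponding to $h_t^i$. Unilaterally sufficient information (USI): $K^i$ is USI for player $i$ if there exist functions $F_t^{i,g^i}$ from values of $K_t^i$ to distributions over $\mathcal{H}_t^i$, depending only on $g^i$, and $\Phi_t^{i,g^{-i}}$ from values of $K_t^i$ to distributions over $\mathcal{X}_t\times\mathcal{H}_t^{-i}$, depending only on $g^{-i}=(g^j)_{j\ne i}$, such that $\Pr^g(x_t,h_t\mid k_t^i)=F_t^{i,g^i}(h_t^i\mid k_t^i)\,\Phi_t^{i,g^{-i}}(x_t,h_t^{-i}\mid k_t^i)$ for all behavioral profiles $g$, all $t$, and all $k_t^i$ with positive probability under $g$ (here $x_t,h_t^i,h_t^{-i}$ range independently over their sets; the left side is $0$ if they disagree on shared components). *)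

theory Defs
  imports "HOL-Probability.Product_PMF" "HOL-Library.FuncSet"
begin

text \<open>A full history at time t is the list of past triples (X_s, U_s, Y_s), s < t,
  together with the current state profile X_t.\<close>

type_synonym ('p,'x,'u,'y) hist = "(('p \<Rightarrow> 'x) \<times> ('p \<Rightarrow> 'u) \<times> ('p \<Rightarrow> 'y)) list \<times> ('p \<Rightarrow> 'x)"

text \<open>Player information H_t^i = (Y_{1:t-1}, U_{1:t-1}, X^i_{1:t}).\<close>
type_synonym ('p,'x,'u,'y) pinfo = "('x \<times> ('p \<Rightarrow> 'u) \<times> ('p \<Rightarrow> 'y)) list \<times> 'x"

type_synonym ('p,'x,'u,'y) strat = "nat \<Rightarrow> ('p,'x,'u,'y) pinfo \<Rightarrow> 'u pmf"

definition info :: "'p \<Rightarrow> ('p,'x,'u,'y) hist \<Rightarrow> ('p,'x,'u,'y) pinfo" where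
  "info i h = (map (\<lambda>(x,u,y). (x i, u, y)) (fst h), snd h i)"

definition step ::
  "('p::finite \<Rightarrow> nat \<Rightarrow> 'x \<Rightarrow> ('p \<Rightarrow> 'u) \<Rightarrow> 'w \<Rightarrow> 'x \<times> 'y)
   \<Rightarrow> ('p \<Rightarrow> nat \<Rightarrow> 'w pmf) \<Rightarrow> ('p \<Rightarrow> ('p,'x,'u,'y) strat) \<Rightarrow> nat
   \<Rightarrow> ('p,'x,'u,'y) hist \<Rightarrow> ('p,'x,'u,'y) hist pmf" where
  "step f W g t h =
     bind_pmf (Pi_pmf UNIV undefined (\<lambda>j. g j t (info j h))) (\<lambda>u.
     bind_pmf (Pi_pmf UNIV undefined (\<lambda>j. W j t)) (\<lambda>w.
       return_pmf (fst h @ [(snd h, u, \<lambda>j. snd (f j t (snd h j) u (w j)))],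
                   \<lambda>j. fst (f j t (snd h j) u (w j)))))"

text \<open>Distribution of the full history at time n+1 under profile g; X_1^j are
  drawn independently from X1 j.\<close>
primrec hdist ::
  "('p::finite \<Rightarrow> 'x pmf) \<Rightarrow> ('p \<Rightarrow> nat \<Rightarrow> 'x \<Rightarrow> ('p \<Rightarrow> 'u) \<Rightarrow> 'w \<Rightarrow> 'x \<times> 'y)
   \<Rightarrow> ('p \<Rightarrow> nat \<Rightarrow> 'w pmf) \<Rightarrow> ('p \<Rightarrow> ('p,'x,'u,'y) strat) \<Rightarrow> nat
   \<Rightarrow> ('p,'x,'u,'y) hist pmf" where
  "hdist X1 f W g 0 = map_pmf (\<lambda>x. ([], x)) (Pi_pmf UNIV undefined X1)"
| "hdist X1 f W g (Suc n) = bind_pmf (hdist X1 f W g n) (step f W g (Suc n))"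

text \<open>F depends only on
  g^i (it receives only g i); Phi receives the profile but must be invariant under
  changes of g i. The component h^{-i} is encoded as restrict hs (-{i}).
  Pr^g(x_t,h_t | k_t^i) is the ratio of probabilities at time t (hdist at t-1).\<close>
definition USI ::
  "('p::finite \<Rightarrow> 'x pmf) \<Rightarrow> ('p \<Rightarrow> nat \<Rightarrow> 'x \<Rightarrow> ('p \<Rightarrow> 'u) \<Rightarrow> 'w \<Rightarrow> 'x \<times> 'y)
   \<Rightarrow> ('p \<Rightarrow> nat \<Rightarrow> 'w pmf) \<Rightarrow> nat \<Rightarrow> 'p \<Rightarrow> (('p,'x,'u,'y) pinfo \<Rightarrow> 'k) \<Rightarrow> bool" where
  "USI X1 f W T i K \<longleftrightarrow>
    (\<exists>(F :: ('p,'x,'u,'y) strat \<Rightarrow> nat \<Rightarrow> 'k \<Rightarrow> ('p,'x,'u,'y) pinfo pmf)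
      (\<Phi> :: ('p \<Rightarrow> ('p,'x,'u,'y) strat) \<Rightarrow> nat \<Rightarrow> 'k
             \<Rightarrow> (('p \<Rightarrow> 'x) \<times> ('p \<Rightarrow> ('p,'x,'u,'y) pinfo)) pmf).
       (\<forall>g g'. (\<forall>j. j \<noteq> i \<longrightarrow> g j = g' j) \<longrightarrow> \<Phi> g = \<Phi> g') \<and>
       (\<forall>g t k. set_pmf (\<Phi> g t k) \<subseteq> UNIV \<times> extensional (- {i})) \<and>
       (\<forall>g t k. t \<in> {1..T} \<longrightarrow>
          measure_pmf.prob (hdist X1 f W g (t - 1)) {h. K (info i h) = k} > 0 \<longrightarrow>
          (\<forall>x hs.
             measure_pmf.prob (hdist X1 f W g (t - 1))
                {h. snd h = x \<and> (\<forall>j. info j h = hs j) \<and> K (info i h) = k}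
             / measure_pmf.prob (hdist X1 f W g (t - 1)) {h. K (info i h) = k}
             = pmf (F (g i) t k) (hs i) * pmf (\<Phi> g t k) (x, restrict hs (- {i})))))"

definition Kinfo :: "('p,'x,'u,'y) pinfo \<Rightarrow> (('p \<Rightarrow> 'u) \<times> ('p \<Rightarrow> 'y)) list \<times> 'x" where
  "Kinfo hi = (map (\<lambda>(xi,u,y). (u, y)) (fst hi), snd hi)"

end

(*
  Under every profile g the probability of a full history h_t is a product over the players j
  of a factor that depends only on g^j and on player j's information h^j_t: the likelihood of
  X^j_1, of j's actions, and of the transitions of j's local state and public observation
  driven by j's own noise.  Fixing K^i_t = k fixes the public part of the history, and then
  a history is the same as a pair (h^i_t, (x_t, h^{-i}_t)) of information compatible with k,
  which ranges over a product set.  So conditionally on k the history splits into two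
  independent parts: h^i_t, distributed according to player i's normalized factor (this is F,
  which depends on g^i only), and (x_t, h^{-i}_t), distributed according to the normalized
  product of the other factors (this is Phi, which does not involve g^i).
*)

theory Submission
  imports Defs
begin

text \<open>\<open>d\<close> is a junk value, used when \<open>w\<close> has no positive mass on \<open>S\<close>.\<close>
definition weighted_pmf :: "('a \<Rightarrow> real) \<Rightarrow> 'a set \<Rightarrow> 'a \<Rightarrow> 'a pmf" where
  "weighted_pmf w S d = (if finite S \<and> (\<forall>x\<in>S. 0 \<le> w x) \<and> sum w S > 0
     then embed_pmf (\<lambda>x. if x \<in> S then w x / sum w S else 0) else return_pmf d)"

lemma pmf_weighted_pmf:
  assumes "finite S" "\<And>x. x \<in> S \<Longrightarrow> 0 \<le> w x" "sum w S > 0"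
  shows "pmf (weighted_pmf w S d) x = (if x \<in> S then w x / sum w S else 0)"
proof -
  let ?p = "\<lambda>x. if x \<in> S then w x / sum w S else 0"
  have "(\<integral>\<^sup>+x. ennreal (?p x) \<partial>count_space UNIV) = (\<Sum>x\<in>S. ennreal (?p x))"
    by (rule nn_integral_count_space') (use assms in auto)
  also have "\<dots> = ennreal (\<Sum>x\<in>S. w x / sum w S)"
    using assms by simp
  also have "(\<Sum>x\<in>S. w x / sum w S) = 1"
    using assms(3) by (simp add: sum_divide_distrib[symmetric])
  finally have "(\<integral>\<^sup>+x. ennreal (?p x) \<partial>count_space UNIV) = 1"
    by simp
  with assms show ?thesis
    by (simp add: weighted_pmf_def pmf_embed_pmf)
qed

lemma set_weighted_pmf: "set_pmf (weighted_pmf w S d) \<subseteq> insert d S"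
proof (cases "finite S \<and> (\<forall>x\<in>S. 0 \<le> w x) \<and> sum w S > 0")
  case True
  then show ?thesis
    by (auto simp: set_pmf_eq pmf_weighted_pmf split: if_splits)
next
  case False
  then show ?thesis
    by (simp only: weighted_pmf_def if_False) simp
qed

lemma cond_prob_product_form:
  fixes p :: "'a pmf" and \<psi> :: "'a \<Rightarrow> 'b \<times> 'c"
  assumes bij: "bij_betw \<psi> S (A \<times> B)" and "finite A" "finite B"
    and pmf_eq: "\<And>s. s \<in> S \<Longrightarrow> pmf p s = a (fst (\<psi> s)) * b (snd (\<psi> s))"
    and a_nonneg: "\<And>\<alpha>. 0 \<le> a \<alpha>" and b_nonneg: "\<And>\<beta>. 0 \<le> b \<beta>"
    and pos: "measure_pmf.prob p S > 0"
  shows "measure_pmf.prob p {s \<in> S. \<psi> s = (\<alpha>, \<beta>)} / measure_pmf.prob p S =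
    pmf (weighted_pmf a A d) \<alpha> * pmf (weighted_pmf b B e) \<beta>"
proof -
  have "finite S"
    using bij \<open>finite A\<close> \<open>finite B\<close> by (simp add: bij_betw_finite)
  have "measure_pmf.prob p S = (\<Sum>s\<in>S. (\<lambda>(\<alpha>, \<beta>). a \<alpha> * b \<beta>) (\<psi> s))"
    using \<open>finite S\<close> by (simp add: measure_measure_pmf_finite pmf_eq case_prod_beta)
  also have "\<dots> = (\<Sum>(\<alpha>, \<beta>)\<in>A \<times> B. a \<alpha> * b \<beta>)"
    by (rule sum.reindex_bij_betw[OF bij])
  also have "\<dots> = sum a A * sum b B"
    by (simp add: sum_product sum.cartesian_product)
  finally have total: "measure_pmf.prob p S = sum a A * sum b B" .
  with pos have "sum a A > 0" "sum b B > 0"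
    using sum_nonneg[of A a] sum_nonneg[of B b] a_nonneg b_nonneg
    by (auto simp: zero_less_mult_iff)
  have point: "measure_pmf.prob p {s \<in> S. \<psi> s = (\<alpha>, \<beta>)} =
      (if (\<alpha>, \<beta>) \<in> A \<times> B then a \<alpha> * b \<beta> else 0)"
  proof (cases "(\<alpha>, \<beta>) \<in> A \<times> B")
    case True
    then have "(\<alpha>, \<beta>) \<in> \<psi> ` S"
      using bij by (simp add: bij_betw_def)
    then obtain s where s: "s \<in> S" "\<psi> s = (\<alpha>, \<beta>)"
      by (metis imageE)
    then have "{s \<in> S. \<psi> s = (\<alpha>, \<beta>)} = {s}"
      using bij by (auto simp: bij_betw_def inj_on_def)
    with True s show ?thesis
      by (simp add: measure_pmf_single pmf_eq)
  next
    case False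
    then have "{s \<in> S. \<psi> s = (\<alpha>, \<beta>)} = {}"
      using bij_betwE[OF bij] by fastforce
    then show ?thesis
      using False by (simp only: measure_empty if_False)
  qed
  show ?thesis
    using \<open>sum a A > 0\<close> \<open>sum b B > 0\<close> \<open>finite A\<close> \<open>finite B\<close> a_nonneg b_nonneg
    by (simp add: total point pmf_weighted_pmf)
qed

text \<open>Player \<open>j\<close>'s factor of the probability of a history, computed on the reversed history
  so that the recursion peels off the most recent period.\<close>
fun local_weight_rev ::
  "('p \<Rightarrow> 'x pmf) \<Rightarrow> ('p \<Rightarrow> nat \<Rightarrow> 'x \<Rightarrow> ('p \<Rightarrow> 'u) \<Rightarrow> 'w \<Rightarrow> 'x \<times> 'y)
   \<Rightarrow> ('p \<Rightarrow> nat \<Rightarrow> 'w pmf) \<Rightarrow> 'p \<Rightarrow> ('p,'x,'u,'y) strat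
   \<Rightarrow> ('x \<times> ('p \<Rightarrow> 'u) \<times> ('p \<Rightarrow> 'y)) list \<Rightarrow> 'x \<Rightarrow> real" where
  "local_weight_rev X1 f W j gj [] x = pmf (X1 j) x"
| "local_weight_rev X1 f W j gj ((x0, u, y) # rps) x =
     local_weight_rev X1 f W j gj rps x0 * pmf (gj (Suc (length rps)) (rev rps, x0)) (u j) *
     measure_pmf.prob (W j (Suc (length rps))) {w. f j (Suc (length rps)) x0 u w = (x, y j)}"

definition local_weight ::
  "('p \<Rightarrow> 'x pmf) \<Rightarrow> ('p \<Rightarrow> nat \<Rightarrow> 'x \<Rightarrow> ('p \<Rightarrow> 'u) \<Rightarrow> 'w \<Rightarrow> 'x \<times> 'y)
   \<Rightarrow> ('p \<Rightarrow> nat \<Rightarrow> 'w pmf) \<Rightarrow> 'p \<Rightarrow> ('p,'x,'u,'y) strat \<Rightarrow> ('p,'x,'u,'y) pinfo \<Rightarrow> real" where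
  "local_weight X1 f W j gj hj = local_weight_rev X1 f W j gj (rev (fst hj)) (snd hj)"

lemma local_weight_Nil: "local_weight X1 f W j gj ([], x) = pmf (X1 j) x"
  by (simp add: local_weight_def)

lemma local_weight_snoc:
  "local_weight X1 f W j gj (ps @ [(x0, u, y)], x) =
     local_weight X1 f W j gj (ps, x0) * pmf (gj (Suc (length ps)) (ps, x0)) (u j) *
     measure_pmf.prob (W j (Suc (length ps))) {w. f j (Suc (length ps)) x0 u w = (x, y j)}"
  by (simp add: local_weight_def)

lemma local_weight_nonneg: "0 \<le> local_weight X1 f W j gj hj"
proof -
  have "0 \<le> local_weight_rev X1 f W j gj rps x" for rps x
    by (induction rps arbitrary: x) auto
  then show ?thesis
    by (simp add: local_weight_def)
qed

lemma info_snoc: "info j (ps @ [(x0, u, y)], x) = (fst (info j (ps, x0)) @ [(x0 j, u, y)], x j)"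
  by (simp add: info_def)

lemma pmf_bind_single:
  assumes "\<And>a. a \<noteq> a0 \<Longrightarrow> pmf (q a) z = 0"
  shows "pmf (bind_pmf p q) z = pmf p a0 * pmf (q a0) z"
proof -
  have "pmf (bind_pmf p q) z = (\<Sum>a\<in>{a0}. pmf (q a) z * pmf p a)"
    unfolding pmf_bind by (rule integral_measure_pmf_real) (use assms in auto)
  then show ?thesis
    by simp
qed

lemma pmf_step_snoc:
  fixes f :: "'p::finite \<Rightarrow> nat \<Rightarrow> 'x \<Rightarrow> ('p \<Rightarrow> 'u) \<Rightarrow> 'w \<Rightarrow> 'x \<times> 'y"
  shows "pmf (step f W g t h) (ps @ [(x0, u, y)], x) =
    (if (ps, x0) = h then \<Prod>j\<in>UNIV. pmf (g j t (info j h)) (u j) *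
       measure_pmf.prob (W j t) {w. f j t (snd h j) u w = (x j, y j)} else 0)"
proof -
  define next_hist where "next_hist u' w =
    (fst h @ [(snd h, u', \<lambda>j. snd (f j t (snd h j) u' (w j)))], \<lambda>j. fst (f j t (snd h j) u' (w j)))"
    for u' w
  define noise where "noise = Pi_pmf UNIV undefined (\<lambda>j. W j t)"
  have step: "step f W g t h =
      bind_pmf (Pi_pmf UNIV undefined (\<lambda>j. g j t (info j h))) (\<lambda>u'. map_pmf (next_hist u') noise)"
    by (simp add: step_def map_pmf_def next_hist_def noise_def)
  have preimage: "next_hist u' -` {(ps @ [(x0, u, y)], x)} =
      (if (ps, x0) = h \<and> u' = u then Pi UNIV (\<lambda>j. {w. f j t (snd h j) u w = (x j, y j)}) else {})"
    for u'
  proof (cases "(ps, x0) = h \<and> u' = u")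
    case True
    then show ?thesis
      by clarsimp (auto simp: next_hist_def fun_eq_iff prod_eq_iff Pi_iff)
  next
    case False
    then show ?thesis
      by (auto simp: next_hist_def)
  qed
  have "pmf (step f W g t h) (ps @ [(x0, u, y)], x) =
      pmf (Pi_pmf UNIV undefined (\<lambda>j. g j t (info j h))) u *
      pmf (map_pmf (next_hist u) noise) (ps @ [(x0, u, y)], x)"
    unfolding step by (rule pmf_bind_single) (simp add: pmf_map preimage)
  then show ?thesis
    by (simp add: pmf_map preimage noise_def pmf_Pi measure_Pi_pmf_Pi prod.distrib)
qed

lemma pmf_step_Nil: "pmf (step f W g t h) ([], x) = 0"
  by (simp add: step_def pmf_bind)

lemma pmf_hdist:
  fixes f :: "'p::finite \<Rightarrow> nat \<Rightarrow> 'x \<Rightarrow> ('p \<Rightarrow> 'u) \<Rightarrow> 'w \<Rightarrow> 'x \<times> 'y"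
  shows "pmf (hdist X1 f W g n) h =
    (if length (fst h) = n then \<Prod>j\<in>UNIV. local_weight X1 f W j (g j) (info j h) else 0)"
proof (induction n arbitrary: h)
  case 0
  have "(\<lambda>x. ([], x)) -` {h} = (if fst h = [] then {snd h} else {})"
    by (cases h) auto
  then show ?case
    by (simp add: pmf_map measure_pmf_single pmf_Pi local_weight_Nil info_def)
next
  case (Suc n)
  obtain qs x where h: "h = (qs, x)"
    by (cases h)
  show ?case
  proof (cases qs rule: rev_exhaust)
    case Nil
    then show ?thesis
      by (simp add: h pmf_bind pmf_step_Nil)
  next
    case (snoc ps e)
    obtain x0 u y where e: "e = (x0, u, y)"
      by (cases e)
    have "pmf (hdist X1 f W g (Suc n)) h =
        pmf (hdist X1 f W g n) (ps, x0) * pmf (step f W g (Suc n) (ps, x0)) h"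
      unfolding hdist.simps by (rule pmf_bind_single) (simp add: h snoc e pmf_step_snoc)
    then show ?thesis
      by (simp add: Suc.IH h snoc e pmf_step_snoc info_snoc local_weight_snoc prod.distrib)
        (simp add: info_def mult.assoc)
  qed
qed

lemma Kinfo_info: "Kinfo (info j h) = (map (\<lambda>(x, u, y). (u, y)) (fst h), snd h j)"
  by (auto simp: Kinfo_def info_def case_prod_beta)

lemma map_component_inj:
  assumes "\<And>j. map (\<lambda>(x, u, y). (x j, u, y)) xs = map (\<lambda>(x, u, y). (x j, u, y)) ys"
  shows "xs = ys"
  using assms
proof (induction xs arbitrary: ys)
  case Nil
  then show ?case
    using Nil.prems[of undefined] by simp
next
  case (Cons a xs)
  obtain b ys' where ys: "ys = b # ys'"
    using Cons.prems[of undefined] by (cases ys) auto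
  have "(\<lambda>(x, u, y). (x j, u, y)) a = (\<lambda>(x, u, y). (x j, u, y)) b" for j
    using Cons.prems[of j] by (simp add: ys)
  then have "a = b"
    by (cases a; cases b) (auto simp: fun_eq_iff)
  moreover have "xs = ys'"
    using Cons.prems by (intro Cons.IH) (simp add: ys)
  ultimately show ?case
    by (simp add: ys)
qed

lemma info_inj:
  assumes "\<And>j. info j h = info j h'"
  shows "h = h'"
proof -
  have "fst h = fst h'"
    using assms by (intro map_component_inj) (simp add: info_def prod_eq_iff)
  moreover have "snd h = snd h'"
    using assms by (simp add: info_def fun_eq_iff)
  ultimately show ?thesis
    by (simp add: prod_eq_iff)
qed

lemma ex_hist_with_infos:
  assumes "\<And>j. Kinfo (H j) = (c, x j)"
  shows "\<exists>h. \<forall>j. info j h = H j"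
proof -
  define h where "h = (map (\<lambda>s. (\<lambda>j. fst (fst (H j) ! s), c ! s)) [0..<length c], x)"
  have public: "map (\<lambda>(xj, u, y). (u, y)) (fst (H j)) = c" and state: "snd (H j) = x j" for j
    using assms[of j] by (simp_all add: Kinfo_def)
  have "info j h = H j" for j
  proof -
    have "fst (info j h) = fst (H j)"
    proof (rule nth_equalityI)
      show "length (fst (info j h)) = length (fst (H j))"
        using public[of j] by (auto simp: info_def h_def)
      fix s
      assume "s < length (fst (info j h))"
      then have "s < length (fst (H j))" "s < length c"
        using public[of j] by (auto simp: info_def h_def)
      moreover have "snd (fst (H j) ! s) = c ! s"
        using \<open>s < length (fst (H j))\<close> by (simp add: case_prod_beta flip: public[of j])
      ultimately show "fst (info j h) ! s = fst (H j) ! s"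
        by (simp add: info_def h_def prod_eq_iff)
    qed
    then show ?thesis
      by (simp add: prod_eq_iff state) (simp add: info_def h_def)
  qed
  then show ?thesis
    by blast
qed

definition others_compatible ::
  "'p \<Rightarrow> (('p \<Rightarrow> 'u) \<times> ('p \<Rightarrow> 'y)) list \<times> 'x \<Rightarrow> (('p \<Rightarrow> 'x) \<times> ('p \<Rightarrow> ('p,'x,'u,'y) pinfo)) set"
  where "others_compatible i k =
    (SIGMA x:{x. x i = snd k}. PiE (- {i}) (\<lambda>j. Kinfo -` {(fst k, x j)}))"

definition split_hist :: "'p \<Rightarrow> ('p,'x,'u,'y) hist \<Rightarrow> ('p,'x,'u,'y) pinfo \<times> ('p \<Rightarrow> 'x) \<times> ('p \<Rightarrow> ('p,'x,'u,'y) pinfo)"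
  where "split_hist i h = (info i h, snd h, restrict (\<lambda>j. info j h) (- {i}))"

lemma bij_split_hist:
  fixes i :: 'p and k :: "(('p \<Rightarrow> 'u) \<times> ('p \<Rightarrow> 'y)) list \<times> 'x"
  shows "bij_betw (split_hist i) {h. Kinfo (info i h) = k} (Kinfo -` {k} \<times> others_compatible i k)"
proof (rule bij_betw_imageI)
  show "inj_on (split_hist i) {h. Kinfo (info i h) = k}"
  proof (rule inj_onI)
    fix h h' :: "('p,'x,'u,'y) hist"
    assume "split_hist i h = split_hist i h'"
    then have "info j h = info j h'" for j
      by (cases "j = i") (auto simp: split_hist_def restrict_def fun_eq_iff split: if_splits)
    then show "h = h'"
      by (rule info_inj)
  qed
  show "split_hist i ` {h. Kinfo (info i h) = k} = Kinfo -` {k} \<times> others_compatible i k"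
  proof (intro equalityI subsetI)
    fix z
    assume "z \<in> split_hist i ` {h. Kinfo (info i h) = k}"
    then show "z \<in> Kinfo -` {k} \<times> others_compatible i k"
      by (auto simp: split_hist_def others_compatible_def Kinfo_info)
  next
    fix z
    assume z: "z \<in> Kinfo -` {k} \<times> others_compatible i k"
    then obtain hi x hm where z_eq: "z = (hi, x, hm)" and hi: "Kinfo hi = k" and x: "x i = snd k"
      and hm: "hm \<in> PiE (- {i}) (\<lambda>j. Kinfo -` {(fst k, x j)})"
      by (auto simp: others_compatible_def)
    define H where "H j = (if j = i then hi else hm j)" for j
    have H: "Kinfo (H j) = (fst k, x j)" for j
      using hi x hm by (auto simp: H_def)
    then obtain h where h: "\<And>j. info j h = H j"
      using ex_hist_with_infos by metis
    have "snd h j = x j" for j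
      using H[of j] by (simp add: Kinfo_def info_def flip: h[of j])
    then have "snd h = x"
      by (rule ext)
    then have "split_hist i h = z"
      using hm by (auto simp: split_hist_def z_eq h H_def restrict_def fun_eq_iff PiE_def extensional_def)
    moreover have "Kinfo (info i h) = k"
      using h hi by (simp add: H_def)
    ultimately show "z \<in> split_hist i ` {h. Kinfo (info i h) = k}"
      by blast
  qed
qed

lemma others_compatible_subset_extensional: "others_compatible i k \<subseteq> UNIV \<times> extensional (- {i})"
  by (auto simp: others_compatible_def PiE_def)

lemma finite_Kinfo_vimage: "finite (Kinfo -` {k} :: ('p::finite,'x::finite,'u::finite,'y::finite) pinfo set)"
proof (rule finite_subset)
  show "Kinfo -` {k} \<subseteq> {xs. length xs = length (fst k)} \<times> (UNIV :: 'x set)"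
    by (auto simp: Kinfo_def)
  show "finite ({xs :: ('x \<times> ('p \<Rightarrow> 'u) \<times> ('p \<Rightarrow> 'y)) list. length xs = length (fst k)} \<times> (UNIV :: 'x set))"
    using finite_lists_length_eq[of "UNIV :: ('x \<times> ('p \<Rightarrow> 'u) \<times> ('p \<Rightarrow> 'y)) set"] by simp
qed

lemma finite_others_compatible:
  "finite (others_compatible i k :: (('p::finite \<Rightarrow> 'x::finite) \<times> ('p \<Rightarrow> ('p,'x,'u::finite,'y::finite) pinfo)) set)"
  unfolding others_compatible_def by (intro finite_SigmaI finite_PiE finite_Kinfo_vimage) auto

definition others_weight ::
  "('p \<Rightarrow> 'x pmf) \<Rightarrow> ('p \<Rightarrow> nat \<Rightarrow> 'x \<Rightarrow> ('p \<Rightarrow> 'u) \<Rightarrow> 'w \<Rightarrow> 'x \<times> 'y)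
   \<Rightarrow> ('p \<Rightarrow> nat \<Rightarrow> 'w pmf) \<Rightarrow> 'p \<Rightarrow> ('p \<Rightarrow> ('p,'x,'u,'y) strat)
   \<Rightarrow> ('p \<Rightarrow> 'x) \<times> ('p \<Rightarrow> ('p,'x,'u,'y) pinfo) \<Rightarrow> real" where
  "others_weight X1 f W i g z = (\<Prod>j\<in>- {i}. local_weight X1 f W j (g j) (snd z j))"

lemma others_weight_cong:
  "(\<And>j. j \<noteq> i \<Longrightarrow> g j = g' j) \<Longrightarrow> others_weight X1 f W i g = others_weight X1 f W i g'"
  by (rule ext) (auto simp: others_weight_def intro!: prod.cong)

lemma others_weight_nonneg: "0 \<le> others_weight X1 f W i g z"
  by (simp add: others_weight_def prod_nonneg local_weight_nonneg)

lemma hdist_cond_Kinfo: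
  fixes X1 :: "'p::finite \<Rightarrow> 'x::finite pmf"
    and f :: "'p \<Rightarrow> nat \<Rightarrow> 'x \<Rightarrow> ('p \<Rightarrow> 'u::finite) \<Rightarrow> 'w \<Rightarrow> 'x \<times> 'y::finite"
    and W :: "'p \<Rightarrow> nat \<Rightarrow> 'w pmf" and g :: "'p \<Rightarrow> ('p,'x,'u,'y) strat" and n :: nat
  defines "p \<equiv> hdist X1 f W g n"
  assumes pos: "measure_pmf.prob p {h. Kinfo (info i h) = k} > 0"
  shows "measure_pmf.prob p {h. snd h = x \<and> (\<forall>j. info j h = hs j) \<and> Kinfo (info i h) = k}
      / measure_pmf.prob p {h. Kinfo (info i h) = k} =
    pmf (weighted_pmf (local_weight X1 f W i (g i)) (Kinfo -` {k}) d) (hs i) *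
    pmf (weighted_pmf (others_weight X1 f W i g) (others_compatible i k) e) (x, restrict hs (- {i}))"
proof -
  let ?S = "{h. Kinfo (info i h) = k}"
  have "?S \<inter> set_pmf p \<noteq> {}"
    using pos measure_Int_set_pmf[of p ?S] by fastforce
  then obtain h0 where "h0 \<in> set_pmf p" "Kinfo (info i h0) = k"
    by blast
  then have length_k: "length (fst k) = n"
    by (auto simp: p_def set_pmf_eq pmf_hdist Kinfo_info split: if_splits)
  have pmf_eq: "pmf p h = local_weight X1 f W i (g i) (fst (split_hist i h)) *
      others_weight X1 f W i g (snd (split_hist i h))" if "h \<in> ?S" for h
  proof -
    have "length (fst h) = n"
      using that length_k by (auto simp: Kinfo_info)
    then have "pmf p h = local_weight X1 f W i (g i) (info i h) *
        (\<Prod>j\<in>- {i}. local_weight X1 f W j (g j) (info j h))"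
      by (simp add: p_def pmf_hdist prod.remove Compl_eq_Diff_UNIV)
    then show ?thesis
      by (simp add: split_hist_def others_weight_def)
  qed
  have event: "{h. snd h = x \<and> (\<forall>j. info j h = hs j) \<and> Kinfo (info i h) = k} =
      {h \<in> ?S. split_hist i h = (hs i, x, restrict hs (- {i}))}"
    by (auto simp: split_hist_def restrict_def fun_eq_iff)
  show ?thesis
    unfolding event
    by (rule cond_prob_product_form[OF bij_split_hist finite_Kinfo_vimage finite_others_compatible
          pmf_eq local_weight_nonneg others_weight_nonneg pos])
qed

theorem proposition2:
  fixes X1 :: "'p::finite \<Rightarrow> 'x::finite pmf"
    and f :: "'p \<Rightarrow> nat \<Rightarrow> 'x \<Rightarrow> ('p \<Rightarrow> 'u::finite) \<Rightarrow> 'w \<Rightarrow> 'x \<times> 'y::finite"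
    and W :: "'p \<Rightarrow> nat \<Rightarrow> 'w pmf"
    and T :: nat and i :: 'p
  shows "USI X1 f W T i Kinfo"
proof -
  define F :: "('p,'x,'u,'y) strat \<Rightarrow> nat \<Rightarrow> _ \<Rightarrow> ('p,'x,'u,'y) pinfo pmf" where
    "F gi t k = weighted_pmf (local_weight X1 f W i gi) (Kinfo -` {k}) undefined" for gi t k
  define \<Phi> :: "('p \<Rightarrow> ('p,'x,'u,'y) strat) \<Rightarrow> nat \<Rightarrow> _ \<Rightarrow> (('p \<Rightarrow> 'x) \<times> ('p \<Rightarrow> ('p,'x,'u,'y) pinfo)) pmf" where
    "\<Phi> g t k = weighted_pmf (others_weight X1 f W i g) (others_compatible i k) (undefined, \<lambda>_. undefined)"
    for g t k
  have "\<Phi> g = \<Phi> g'" if "\<forall>j. j \<noteq> i \<longrightarrow> g j = g' j" for g g'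
    using that by (intro ext) (simp add: \<Phi>_def others_weight_cong[of i g g'])
  moreover have "set_pmf (\<Phi> g t k) \<subseteq> UNIV \<times> extensional (- {i})" for g t k
    unfolding \<Phi>_def using others_compatible_subset_extensional[of i k]
    by (intro order.trans[OF set_weighted_pmf]) (simp add: extensional_def)
  moreover have "measure_pmf.prob (hdist X1 f W g (t - 1))
        {h. snd h = x \<and> (\<forall>j. info j h = hs j) \<and> Kinfo (info i h) = k}
      / measure_pmf.prob (hdist X1 f W g (t - 1)) {h. Kinfo (info i h) = k} =
      pmf (F (g i) t k) (hs i) * pmf (\<Phi> g t k) (x, restrict hs (- {i}))"
    if "measure_pmf.prob (hdist X1 f W g (t - 1)) {h. Kinfo (info i h) = k} > 0" for g t k x hs
    unfolding F_def \<Phi>_def using that by (rule hdist_cond_Kinfo)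
  ultimately show ?thesis
    unfolding USI_def by (intro exI[of _ F] exI[of _ \<Phi>]) blast
qed

end
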